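(* Let $G$ be a cyclic group of odd order which is not a prime power. Then the power graph $\mathscr{G}(G)$ is not overfull.
   Context: For a finite group $G$, the power graph $\mathscr{G}(G)$ is the simple graph with vertex set the elements of $G$, in which two distinct elements $a,b$ are adjacent if and only if one is a power of the other. For a finite simple graph $\Gamma$ on $n$ vertices with maximum vertex degree $\Delta(\Gamma)$, $\Gamma$ is called overfull if $|E(\Gamma)| / \lfloor n/2 \rfloor > \Delta(\Gamma)$. *)

theory Defs
  imports "HOL-Algebra.Algebra" "HOL-Number_Theory.Number_Theory"
begin

definition power_graph_adj :: "('a, 'b) monoid_scheme \<Rightarrow> 'a \<Rightarrow> 'a \<Rightarrow> bool" where
  "power_graph_adj G a b \<longleftrightarrow> a \<in> carrier G \<and> b \<in> carrier G \<and> a \<noteq> b \<and>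
     ((\<exists>k::nat. b = a [^]\<^bsub>G\<^esub> k) \<or> (\<exists>k::nat. a = b [^]\<^bsub>G\<^esub> k))"

definition power_graph_edges :: "('a, 'b) monoid_scheme \<Rightarrow> 'a set set" where
  "power_graph_edges G = {{a, b} | a b. power_graph_adj G a b}"

definition power_graph_degree :: "('a, 'b) monoid_scheme \<Rightarrow> 'a \<Rightarrow> nat" where
  "power_graph_degree G a = card {b. power_graph_adj G a b}"

definition power_graph_max_degree :: "('a, 'b) monoid_scheme \<Rightarrow> nat" where
  "power_graph_max_degree G = Max (power_graph_degree G ` carrier G)"

definition power_graph_overfull :: "('a, 'b) monoid_scheme \<Rightarrow> bool" where
  "power_graph_overfull G \<longleftrightarrow>
     real (card (power_graph_edges G)) / real (card (carrier G) div 2)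
       > real (power_graph_max_degree G)"

end

theory Submission
  imports Defs
begin

(* Write n = x * y with coprime x, y > 1; as n is odd, x, y >= 3. Adjacent vertices of a power
   graph have orders dividing one another, so no nontrivial element of the subgroup of order x
   is adjacent to a nontrivial element of the subgroup of order y. Hence
   |E| <= (n choose 2) - (x - 1)(y - 1) <= n (n - 1)/2 - (n - 1)/2 = (n - 1) * floor(n/2),
   while the identity is adjacent to all other n - 1 vertices. *)

lemma card_add_cross_pairs_le_choose_two:
  fixes V :: "'a set" and E :: "'a set set"
  assumes "finite V" and E: "E \<subseteq> {S. S \<subseteq> V \<and> card S = 2}"
    and "A \<subseteq> V" "B \<subseteq> V" "A \<inter> B = {}"
    and nonadj: "\<And>a b. a \<in> A \<Longrightarrow> b \<in> B \<Longrightarrow> {a, b} \<notin> E"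
  shows "card E + card A * card B \<le> card V choose 2"
proof -
  let ?pairs = "{S. S \<subseteq> V \<and> card S = 2}"
  define AB where "AB = (\<lambda>(a, b). {a, b}) ` (A \<times> B)"
  have "inj_on (\<lambda>(a, b). {a, b}) (A \<times> B)"
    using \<open>A \<inter> B = {}\<close> by (auto intro!: inj_onI simp: doubleton_eq_iff)
  then have "card AB = card A * card B"
    unfolding AB_def by (simp add: card_image card_cartesian_product)
  moreover have "AB \<subseteq> ?pairs" "E \<inter> AB = {}"
    using assms(3-6) unfolding AB_def by (auto simp: card_insert_if)
  moreover have "finite ?pairs"
    using \<open>finite V\<close> by simp
  ultimately have "card E + card A * card B \<le> card ?pairs"
    using E by (metis card_Un_disjoint card_mono finite_subset le_sup_iff)
  also have "\<dots> = card V choose 2"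
    using n_subsets[OF \<open>finite V\<close>] by simp
  finally show ?thesis .
qed

lemma power_graph_adj_sym: "power_graph_adj G a b \<longleftrightarrow> power_graph_adj G b a"
  unfolding power_graph_adj_def by blast

lemma doubleton_in_power_graph_edges_iff:
  "{a, b} \<in> power_graph_edges G \<longleftrightarrow> power_graph_adj G a b"
  unfolding power_graph_edges_def by (auto simp: doubleton_eq_iff power_graph_adj_sym)

lemma power_graph_edges_subset:
  "power_graph_edges G \<subseteq> {S. S \<subseteq> carrier G \<and> card S = 2}"
  unfolding power_graph_edges_def power_graph_adj_def by auto

(* This also covers card (carrier G) div 2 = 0, where the real division in the definition yields 0. *)
lemma power_graph_not_overfull_if_card_edges_le:
  assumes "card (power_graph_edges G) \<le> power_graph_max_degree G * (card (carrier G) div 2)"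
  shows "\<not> power_graph_overfull G"
  using assms unfolding power_graph_overfull_def
  by (cases "card (carrier G) div 2 = 0") (auto simp: field_simps simp flip: of_nat_mult)

lemma (in group) ord_pow_dvd_ord:
  assumes "x \<in> carrier G"
  shows "ord (x [^] (k::nat)) dvd ord x"
proof -
  have "(x [^] k) [^] ord x = (x [^] ord x) [^] k"
    using assms by (metis mult.commute nat_pow_pow)
  also have "\<dots> = \<one>"
    using assms by simp
  finally show ?thesis
    by (metis assms nat_pow_closed pow_eq_id)
qed

lemma (in group) power_graph_adj_imp_ord_dvd:
  assumes "power_graph_adj G u v"
  shows "ord u dvd ord v \<or> ord v dvd ord u"
  using assms unfolding power_graph_adj_def by (auto intro: ord_pow_dvd_ord)

lemma (in group) power_graph_max_degree_ge:
  assumes "finite (carrier G)"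
  shows "order G - 1 \<le> power_graph_max_degree G"
proof -
  have "{b. power_graph_adj G \<one> b} = carrier G - {\<one>}"
    unfolding power_graph_adj_def by (auto intro: exI[of _ 0])
  then have "power_graph_degree G \<one> = order G - 1"
    using assms by (simp add: power_graph_degree_def order_def card_Diff_singleton)
  moreover have "power_graph_degree G \<one> \<le> power_graph_max_degree G"
    unfolding power_graph_max_degree_def using assms by (intro Max_ge) auto
  ultimately show ?thesis by simp
qed

lemma (in group) card_power_graph_edges_add_le_choose_two:
  assumes fin: "finite (carrier G)" and a: "a \<in> carrier G" and b: "b \<in> carrier G"
    and coprime: "coprime (ord a) (ord b)"
  shows "card (power_graph_edges G) + (ord a - 1) * (ord b - 1) \<le> order G choose 2"
proof -
  define A where "A = generate G {a} - {\<one>}"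
  define B where "B = generate G {b} - {\<one>}"
  have sub: "generate G {x} \<subseteq> carrier G" if "x \<in> carrier G" for x
    using that generate_incl by blast
  have ord_dvd: "ord u dvd ord x" if x: "x \<in> carrier G" and u: "u \<in> generate G {x}" for x u
  proof -
    obtain k :: nat where "u = x [^] k"
      using u generate_pow_on_finite_carrier[OF fin x] by blast
    then show ?thesis
      using ord_pow_dvd_ord[OF x] by simp
  qed
  have card_nontrivial: "card (generate G {x} - {\<one>}) = ord x - 1" if "x \<in> carrier G" for x
  proof -
    have "finite (generate G {x})"
      using fin sub[OF that] by (rule finite_subset[rotated])
    then show ?thesis
      using generate.one[of G "{x}"] generate_pow_card[OF that] by (simp add: card_Diff_singleton)
  qed
  have trivial: "u = \<one> \<or> v = \<one>"
    if u: "u \<in> generate G {a}" and v: "v \<in> generate G {b}"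
      and dvd: "ord u dvd ord v \<or> ord v dvd ord u" for u v
  proof -
    have "coprime (ord u) (ord v)"
      using ord_dvd[OF a u] ord_dvd[OF b v] coprime by (rule coprime_divisors)
    with dvd have "ord u = 1 \<or> ord v = 1"
      by (auto simp: coprime_absorb_left coprime_absorb_right)
    moreover have "u \<in> carrier G" "v \<in> carrier G"
      using u v sub a b by auto
    ultimately show ?thesis
      using ord_eq_1 by blast
  qed
  have "card (power_graph_edges G) + card A * card B \<le> card (carrier G) choose 2"
  proof (rule card_add_cross_pairs_le_choose_two[OF fin power_graph_edges_subset])
    show "A \<subseteq> carrier G" "B \<subseteq> carrier G"
      unfolding A_def B_def using sub a b by auto
    show "A \<inter> B = {}"
    proof (rule equals0I)
      fix u
      assume "u \<in> A \<inter> B"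
      then show False
        using trivial[of u u] unfolding A_def B_def by auto
    qed
    show "{u, v} \<notin> power_graph_edges G" if "u \<in> A" "v \<in> B" for u v
    proof
      assume "{u, v} \<in> power_graph_edges G"
      then have "ord u dvd ord v \<or> ord v dvd ord u"
        by (simp add: doubleton_in_power_graph_edges_iff power_graph_adj_imp_ord_dvd)
      with that show False
        using trivial[of u v] unfolding A_def B_def by auto
    qed
  qed
  then show ?thesis
    unfolding A_def B_def order_def using card_nontrivial a b by simp
qed

lemma (in group) cyclic_group_obtains_ord:
  assumes "finite (carrier G)" "cyclic_group G" "d dvd order G"
  obtains a where "a \<in> carrier G" "ord a = d"
proof -
  obtain g where g: "g \<in> carrier G" "subgroup_generated G {g} = G"
    using assms(2) unfolding cyclic_group_def by blast
  then have "ord g = order G"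
    using cyclic_order_is_ord by simp
  moreover have "order G > 0"
    using assms(1) by (simp add: order_gt_0_iff_finite)
  ultimately have "ord (g [^] (order G div d)) = d"
    using assms(3) g(1) by (subst ord_pow) (auto elim!: dvdE)
  then show ?thesis
    using that g(1) by blast
qed

lemma not_primepow_obtains_coprime_factors:
  fixes n :: nat
  assumes "n > 1" "\<not> primepow n"
  obtains x y where "n = x * y" "coprime x y" "1 < x" "1 < y"
proof -
  obtain p where p: "Factorial_Ring.prime p" "p dvd n"
    using assms(1) prime_factor_nat by (metis less_irrefl)
  define k where "k = multiplicity p n"
  obtain y where y: "n = p ^ k * y" "\<not> p dvd y"
    using multiplicity_decompose'[of n p] k_def assms(1) p(1) not_prime_unit
    by (metis not_one_less_zero)
  have "k > 0"
    using p assms(1) k_def by (simp add: prime_multiplicity_gt_zero_iff)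
  then have "1 < p ^ k"
    using p by (metis one_less_power prime_gt_1_nat)
  moreover have "y \<noteq> 1"
  proof
    assume "y = 1"
    then have "primepow n"
      using y(1) p(1) \<open>k > 0\<close> unfolding primepow_def by auto
    with assms(2) show False ..
  qed
  moreover have "y \<noteq> 0"
    using y assms(1) by (metis mult_0_right not_one_less_zero)
  moreover have "coprime (p ^ k) y"
    using p y(2) by (simp add: prime_imp_coprime)
  ultimately show ?thesis
    using that y(1) by simp
qed

lemma odd_choose_two: "odd (n::nat) \<Longrightarrow> n choose 2 = n * (n div 2)"
  by (auto simp: choose_two elim!: oddE)

lemma half_mult_le_pred_mult_pred:
  fixes x y :: nat
  assumes "3 \<le> x" "3 \<le> y"
  shows "x * y div 2 \<le> (x - 1) * (y - 1)"
proof -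
  have "1 * 1 \<le> (x - 2) * (y - 2)"
    using assms by (intro mult_mono) auto
  then show ?thesis
    using assms by (simp add: algebra_simps)
qed

lemma le_pred_mult_div_two_if_add_le_choose_two:
  fixes e x y :: nat
  assumes "odd x" "odd y" "1 < x" "1 < y"
    and "e + (x - 1) * (y - 1) \<le> x * y choose 2"
  shows "e \<le> (x * y - 1) * (x * y div 2)"
proof -
  let ?n = "x * y"
  have "3 \<le> x" "3 \<le> y"
    using assms(1-4) by presburger+
  then have "?n div 2 \<le> (x - 1) * (y - 1)"
    by (rule half_mult_le_pred_mult_pred)
  moreover have "e + (x - 1) * (y - 1) \<le> ?n * (?n div 2)"
    using assms(5) odd_choose_two[of ?n] assms(1,2) by simp
  moreover have "(?n - 1) * (?n div 2) = ?n * (?n div 2) - ?n div 2"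
    by (simp add: diff_mult_distrib)
  ultimately show ?thesis
    by linarith
qed

theorem mainTheorem7:
  fixes G :: "('a, 'b) monoid_scheme"
  assumes "group G"
    and "finite (carrier G)"
    and "cyclic_group G"
    and "odd (order G)"
    and "\<not> primepow (order G)"
  shows "\<not> power_graph_overfull G"
proof -
  interpret group G by fact
  let ?n = "order G" and ?E = "power_graph_edges G"
  show ?thesis
  proof (cases "?n = 1")
    case True
    then show ?thesis by (simp add: power_graph_overfull_def order_def)
  next
    case False
    moreover have "?n > 0"
      using assms(2) by (simp add: order_gt_0_iff_finite)
    ultimately obtain x y where xy: "?n = x * y" "coprime x y" "1 < x" "1 < y"
      using assms(5) not_primepow_obtains_coprime_factors by (metis less_one nat_neq_iff)
    obtain a b where a: "a \<in> carrier G" "ord a = x" and b: "b \<in> carrier G" "ord b = y"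
      using cyclic_group_obtains_ord[OF assms(2,3)] xy(1) by (metis dvd_triv_left dvd_triv_right)
    have "card ?E + (x - 1) * (y - 1) \<le> ?n choose 2"
      using card_power_graph_edges_add_le_choose_two[OF assms(2) a(1) b(1)] a(2) b(2) xy(2)
      by simp
    moreover have "odd x" "odd y"
      using xy(1) assms(4) by auto
    ultimately have "card ?E \<le> (?n - 1) * (?n div 2)"
      using le_pred_mult_div_two_if_add_le_choose_two xy by simp
    also have "\<dots> \<le> power_graph_max_degree G * (?n div 2)"
      using power_graph_max_degree_ge[OF assms(2)] by simp
    finally show ?thesis
      by (intro power_graph_not_overfull_if_card_edges_le) (simp add: order_def)
  qed
qed

end
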